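(* There exists a family $\mathcal F_0$ of $3$ axis-parallel rectangles such that $\pi_L(\mathcal F_0)\ge \frac{36}{31}\,\pi(\mathcal F_0)$.
   Context: For a finite family $\mathcal F$ of closed axis-parallel rectangles in the plane, a point set $P\subset\mathbb R^2$ is $\mathcal F$-piercing if every translate of every rectangle in $\mathcal F$ contains a point of $P$. The density of a point set $P$ is $\limsup_{r\to\infty} |P\cap[-r,r]^2|/(2r)^2$. $\pi(\mathcal F)$ is the infimum of the densities of $\mathcal F$-piercing point sets, and $\pi_L(\mathcal F)$ is the infimum of the densities of $\mathcal F$-piercing lattices, where a lattice $\{iu+jv:i,j\in\mathbb Z\}$ ($u,v$ linearly independent) has density $1/|\det[u,v]|$. *)

theory Defs
  imports "HOL-Analysis.Analysis" "HOL-Library.Liminf_Limsup"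
begin

definition closed_axis_rect :: "(real \<times> real) set \<Rightarrow> bool" where
  "closed_axis_rect R \<longleftrightarrow> (\<exists>a b c d. a < b \<and> c < d \<and> R = {a..b} \<times> {c..d})"

definition translate :: "real \<times> real \<Rightarrow> (real \<times> real) set \<Rightarrow> (real \<times> real) set" where
  "translate t R = (\<lambda>p. p + t) ` R"

definition piercing :: "(real \<times> real) set set \<Rightarrow> (real \<times> real) set \<Rightarrow> bool" where
  "piercing F P \<longleftrightarrow> (\<forall>R\<in>F. \<forall>t. translate t R \<inter> P \<noteq> {})"

definition count_ratio :: "(real \<times> real) set \<Rightarrow> real \<Rightarrow> ereal" where
  "count_ratio P r = (if finite (P \<inter> ({-r..r} \<times> {-r..r}))
      then ereal (real (card (P \<inter> ({-r..r} \<times> {-r..r}))) / (2 * r)^2)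
      else \<infinity>)"

definition density :: "(real \<times> real) set \<Rightarrow> ereal" where
  "density P = Limsup at_top (count_ratio P)"

definition pierce_num :: "(real \<times> real) set set \<Rightarrow> ereal" where
  "pierce_num F = Inf {density P | P. piercing F P}"

definition lattice :: "real \<times> real \<Rightarrow> real \<times> real \<Rightarrow> (real \<times> real) set" where
  "lattice u v = {of_int i *\<^sub>R u + of_int j *\<^sub>R v | i j :: int. True}"

definition det2 :: "real \<times> real \<Rightarrow> real \<times> real \<Rightarrow> real" where
  "det2 u v = fst u * snd v - snd u * fst v"

definition lattice_pierce_num :: "(real \<times> real) set set \<Rightarrow> ereal" where
  "lattice_pierce_num F = Inf {ereal (1 / \<bar>det2 u v\<bar>) | u v.
      independent {u, v} \<and> u \<noteq> v \<and> piercing F (lattice u v)}"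

end

theory Submission
  imports Defs "HOL-Real_Asymp.Real_Asymp"
begin

text \<open>F0 consists of the 1 x 6, 6 x 1 and 3 x 3 boxes. The integer points (x, y) with
y = sigma(x) mod 6, for a suitable permutation sigma of the residues mod 6, pierce all
three boxes and have density 1/6.

For a lattice L piercing F0, the 1 x 6 and 6 x 1 boxes provide lattice points p with
0 < p1 <= 1, |p2| <= 3 and r with 0 < r2 <= 1, |r1| <= 3. If one of them is short
(|p2| <= 1 or |r1| <= 1), its primitive part extends to a basis of L and the 3 x 3 boxes
bound det L by 5. Otherwise |det(p, r)| <= 10, so either det L <= 5 or p, r is a basis
of L; then the 1 x 6 box must fit into the vertical gap between two consecutive rows of
lattice points parallel to p, and the 6 x 1 box into the horizontal gap between two
consecutive rows parallel to r, which forces det L <= 31/6. Hence every piercing lattice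
has density at least 6/31 = (36/31) * (1/6).\<close>

section \<open>Lattices in the plane\<close>

lemma mem_lattice_iff: "z \<in> lattice u v \<longleftrightarrow> (\<exists>i j::int. z = of_int i *\<^sub>R u + of_int j *\<^sub>R v)"
  by (simp add: lattice_def)

lemma lattice_eq_range: "lattice u v = range (\<lambda>(i::int, j::int). of_int i *\<^sub>R u + of_int j *\<^sub>R v)"
  unfolding lattice_def by force

lemma lattice_commute: "lattice u v = lattice v u"
proof -
  have "z \<in> lattice v u" if z: "z \<in> lattice u v" for z u v
  proof -
    obtain i j :: int where "z = of_int i *\<^sub>R u + of_int j *\<^sub>R v"
      using z unfolding mem_lattice_iff by blast
    then have "z = of_int j *\<^sub>R v + of_int i *\<^sub>R u" by simp
    then show ?thesis unfolding mem_lattice_iff by blast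
  qed
  then show ?thesis by blast
qed

lemma lattice_uminus_right: "lattice u (- v) = lattice u v"
proof -
  have "z \<in> lattice u v" if z: "z \<in> lattice u (- v)" for z v
  proof -
    obtain i j :: int where "z = of_int i *\<^sub>R u + of_int j *\<^sub>R (- v)"
      using z unfolding mem_lattice_iff by blast
    then have "z = of_int i *\<^sub>R u + of_int (- j) *\<^sub>R v" by simp
    then show ?thesis unfolding mem_lattice_iff by blast
  qed
  from this[of _ v] this[of _ "- v"] show ?thesis by auto
qed

lemma linear_image_lattice:
  assumes "linear f" shows "f ` lattice u v = lattice (f u) (f v)"
  unfolding lattice_eq_range image_image by (simp add: case_prod_beta linear_add[OF assms] linear_scale[OF assms])

lemma linear_image_subset_lattice:
  assumes "linear f" and "P \<subseteq> lattice p q"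
  shows "f ` P \<subseteq> lattice (f p) (f q)"
proof -
  have "f ` P \<subseteq> f ` lattice p q" using assms(2) by (rule image_mono)
  then show ?thesis by (simp add: linear_image_lattice[OF assms(1)])
qed

lemma det2_uminus_right [simp]: "det2 z (- z') = - det2 z z'"
  and det2_swap [simp]: "det2 (prod.swap z) (prod.swap z') = - det2 z z'"
  by (simp_all add: det2_def)

lemma det2_commute: "det2 v u = - det2 u v"
  by (simp add: det2_def)

lemma det2_nonzero_if_independent:
  assumes "independent {u, v}" "u \<noteq> v"
  shows "det2 u v \<noteq> 0"
proof
  assume det: "det2 u v = 0"
  have "independent {v}" "u \<notin> span {v}" using assms by (simp_all add: independent_insert)
  then have "v \<noteq> 0" using independent_insert[of v "{}"] by (auto simp: span_empty)
  have "u \<in> span {v}"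
  proof (cases "fst v = 0")
    case False
    then have "u = (fst u / fst v) *\<^sub>R v" using det by (simp add: prod_eq_iff det2_def field_simps)
    then show ?thesis unfolding span_singleton by blast
  next
    case True
    then have "snd v \<noteq> 0" "fst u = 0" using \<open>v \<noteq> 0\<close> det by (auto simp: prod_eq_iff det2_def)
    then have "u = (snd u / snd v) *\<^sub>R v" using True by (simp add: prod_eq_iff)
    then show ?thesis unfolding span_singleton by blast
  qed
  then show False using \<open>u \<notin> span {v}\<close> by contradiction
qed

lemma det2_lattice:
  assumes "z \<in> lattice u v" "z' \<in> lattice u v"
  obtains m :: int where "det2 z z' = of_int m * det2 u v"
proof -
  obtain i j k l :: int where "z = of_int i *\<^sub>R u + of_int j *\<^sub>R v" "z' = of_int k *\<^sub>R u + of_int l *\<^sub>R v"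
    using assms by (auto simp: lattice_def)
  then have "det2 z z' = of_int (i * l - j * k) * det2 u v"
    by (simp add: det2_def algebra_simps)
  then show thesis by (rule that)
qed

lemma abs_det2_lattice_eq_or_ge_double:
  assumes "z \<in> lattice u v" "z' \<in> lattice u v" "det2 z z' \<noteq> 0"
  shows "\<bar>det2 z z'\<bar> = \<bar>det2 u v\<bar> \<or> 2 * \<bar>det2 u v\<bar> \<le> \<bar>det2 z z'\<bar>"
proof -
  obtain m :: int where m: "det2 z z' = of_int m * det2 u v" using det2_lattice[OF assms(1,2)] .
  then have "m \<noteq> 0" using assms(3) by auto
  then consider "\<bar>m\<bar> = 1" | "2 \<le> \<bar>m\<bar>" by linarith
  then show ?thesis
  proof cases
    case 1
    then have "\<bar>of_int m\<bar> = (1::real)" by (simp flip: of_int_abs)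
    then show ?thesis using m by (simp add: abs_mult)
  next
    case 2
    then have "2 * \<bar>det2 u v\<bar> \<le> of_int \<bar>m\<bar> * \<bar>det2 u v\<bar>" by (intro mult_right_mono) simp_all
    then show ?thesis using m by (simp add: abs_mult)
  qed
qed

lemma det2_cramer: "det2 p q *\<^sub>R z = det2 z q *\<^sub>R p + det2 p z *\<^sub>R q"
  by (simp add: det2_def prod_eq_iff algebra_simps)

lemma lattice_subset_lattice_if_abs_det2_eq:
  assumes p: "p \<in> lattice u v" and q: "q \<in> lattice u v"
    and det: "\<bar>det2 p q\<bar> = \<bar>det2 u v\<bar>" and nonzero: "det2 u v \<noteq> 0"
  shows "lattice u v \<subseteq> lattice p q"
proof
  fix z assume z: "z \<in> lattice u v"
  obtain e where e: "det2 p q = of_int e * det2 u v" using det2_lattice[OF p q] .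
  obtain m where m: "det2 z q = of_int m * det2 u v" using det2_lattice[OF z q] .
  obtain n where n: "det2 p z = of_int n * det2 u v" using det2_lattice[OF p z] .
  have "\<bar>e\<bar> = 1" using det nonzero e by (simp add: abs_mult)
  then have "e * e = 1" by (metis abs_mult_self_eq mult_1)
  then have e2: "of_int e * of_int e = (1::real)" by (metis of_int_1 of_int_mult)
  have "det2 u v *\<^sub>R (of_int e *\<^sub>R z) = det2 u v *\<^sub>R (of_int m *\<^sub>R p + of_int n *\<^sub>R q)"
    using det2_cramer[of p q z] by (simp add: e m n scaleR_add_right mult.commute)
  then have ez: "of_int e *\<^sub>R z = of_int m *\<^sub>R p + of_int n *\<^sub>R q"
    by (rule scaleR_left_imp_eq[OF nonzero])
  have "z = of_int e *\<^sub>R (of_int e *\<^sub>R z)" using e2 by simp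
  also have "\<dots> = of_int (e * m) *\<^sub>R p + of_int (e * n) *\<^sub>R q"
    by (simp add: ez scaleR_add_right)
  finally have "z = of_int (e * m) *\<^sub>R p + of_int (e * n) *\<^sub>R q" .
  then show "z \<in> lattice p q" unfolding mem_lattice_iff by blast
qed

lemma lattice_point_multiple_of_primitive:
  assumes z: "z \<in> lattice u v" and nonzero: "z \<noteq> 0"
  obtains g :: int and y q where "1 \<le> g" "z = of_int g *\<^sub>R y"
    "y \<in> lattice u v" "q \<in> lattice u v" "det2 y q = det2 u v"
proof -
  obtain i j :: int where zij: "z = of_int i *\<^sub>R u + of_int j *\<^sub>R v"
    using z unfolding mem_lattice_iff by blast
  have ij: "i \<noteq> 0 \<or> j \<noteq> 0" using nonzero zij by auto
  define g where "g = gcd i j"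
  define i' j' where "i' = i div g" and "j' = j div g"
  have g: "1 \<le> g" using ij gcd_pos_int[of i j] unfolding g_def by linarith
  have i: "i = g * i'" and j: "j = g * j'" by (simp_all add: i'_def j'_def g_def)
  have "coprime i' j'" unfolding i'_def j'_def g_def using ij by (rule div_gcd_coprime)
  then obtain a b where ab: "a * i' + b * j' = 1" using bezout_int[of i' j'] by auto
  define y where "y = of_int i' *\<^sub>R u + of_int j' *\<^sub>R v"
  define q where "q = of_int (- b) *\<^sub>R u + of_int a *\<^sub>R v"
  have "det2 y q = of_int (a * i' + b * j') * det2 u v"
    by (simp add: y_def q_def det2_def algebra_simps)
  then have "det2 y q = det2 u v" by (simp add: ab)
  moreover have "z = of_int g *\<^sub>R y" by (simp add: zij y_def i j scaleR_add_right)
  moreover have "y \<in> lattice u v" "q \<in> lattice u v"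
    unfolding y_def q_def mem_lattice_iff by blast+
  ultimately show thesis using g that by blast
qed

lemma abs_det2_le_norm_mult: "\<bar>det2 z w\<bar> \<le> norm z * norm w"
proof -
  obtain z1 z2 w1 w2 where zw: "z = (z1, z2)" "w = (w1, w2)" by fastforce
  have "(z1 * w2 - z2 * w1)\<^sup>2 \<le> (z1\<^sup>2 + z2\<^sup>2) * (w1\<^sup>2 + w2\<^sup>2)"
    using zero_le_power2[of "z1 * w1 + z2 * w2"] by (simp add: power2_eq_square algebra_simps)
  then have "\<bar>z1 * w2 - z2 * w1\<bar> \<le> sqrt ((z1\<^sup>2 + z2\<^sup>2) * (w1\<^sup>2 + w2\<^sup>2))"
    by (simp add: real_le_rsqrt)
  then show ?thesis by (simp add: zw det2_def norm_Pair real_sqrt_mult)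
qed

text \<open>By Cramer's rule the coordinates of a lattice point z in the basis u, v are
  det2 z v / det2 u v and det2 u z / det2 u v.\<close>
lemma finite_lattice_Int_bounded:
  assumes nonzero: "det2 u v \<noteq> 0" and "bounded S"
  shows "finite (lattice u v \<inter> S)"
proof -
  obtain B where B: "\<And>z. z \<in> S \<Longrightarrow> norm z \<le> B"
    using \<open>bounded S\<close> by (auto simp: bounded_iff)
  define N where "N = \<lceil>B * (norm u + norm v) / \<bar>det2 u v\<bar>\<rceil>"
  have coeff_le: "\<bar>k\<bar> \<le> N" if "\<bar>of_int k * det2 u v\<bar> \<le> B * (norm u + norm v)" for k :: int
  proof -
    have "of_int \<bar>k\<bar> \<le> B * (norm u + norm v) / \<bar>det2 u v\<bar>"
      using that nonzero by (simp add: abs_mult pos_le_divide_eq)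
    then show ?thesis unfolding N_def le_ceiling_iff by linarith
  qed
  have "\<bar>i\<bar> \<le> N \<and> \<bar>j\<bar> \<le> N" if "of_int i *\<^sub>R u + of_int j *\<^sub>R v \<in> S" for i j :: int
  proof -
    define z where "z = of_int i *\<^sub>R u + of_int j *\<^sub>R v"
    have "norm z \<le> B" using B that by (simp add: z_def)
    then have "norm z * norm v \<le> B * (norm u + norm v)" "norm u * norm z \<le> (norm u + norm v) * B"
      by (intro mult_mono; simp add: order_trans[OF norm_ge_zero])+
    moreover have "det2 z v = of_int i * det2 u v" "det2 u z = of_int j * det2 u v"
      by (simp_all add: z_def det2_def algebra_simps)
    ultimately show ?thesis
      using abs_det2_le_norm_mult[of z v] abs_det2_le_norm_mult[of u z]
      by (auto simp: mult.commute intro!: coeff_le)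
  qed
  then have "lattice u v \<inter> S \<subseteq> (\<lambda>(i, j). of_int i *\<^sub>R u + of_int j *\<^sub>R v) ` ({-N..N} \<times> {-N..N})"
    unfolding lattice_eq_range by fastforce
  then show ?thesis by (rule finite_subset) simp
qed

section \<open>Point sets piercing all translates of a box\<close>

definition pierces_box :: "(real \<times> real) set \<Rightarrow> real \<Rightarrow> real \<Rightarrow> bool" where
  "pierces_box P w h \<longleftrightarrow> (\<forall>a b. \<exists>z\<in>P. a \<le> fst z \<and> fst z \<le> a + w \<and> b \<le> snd z \<and> snd z \<le> b + h)"

lemma mem_translate_iff: "z \<in> translate t A \<longleftrightarrow> z - t \<in> A"
proof
  assume "z - t \<in> A"
  then show "z \<in> translate t A" unfolding translate_def by (rule rev_image_eqI) simp
qed (auto simp: translate_def)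

lemma translates_meet_iff_pierces_box:
  "(\<forall>t. translate t ({0..w} \<times> {0..h}) \<inter> P \<noteq> {}) \<longleftrightarrow> pierces_box P w h"
proof -
  have box: "z \<in> translate t ({0..w} \<times> {0..h}) \<longleftrightarrow>
      fst t \<le> fst z \<and> fst z \<le> fst t + w \<and> snd t \<le> snd z \<and> snd z \<le> snd t + h" for z t
    by (auto simp: mem_translate_iff mem_Times_iff)
  show ?thesis
  proof
    assume meet: "\<forall>t. translate t ({0..w} \<times> {0..h}) \<inter> P \<noteq> {}"
    show "pierces_box P w h" unfolding pierces_box_def
    proof (intro allI)
      fix a b
      obtain z where "z \<in> P" "z \<in> translate (a, b) ({0..w} \<times> {0..h})" using meet by blast
      then show "\<exists>z\<in>P. a \<le> fst z \<and> fst z \<le> a + w \<and> b \<le> snd z \<and> snd z \<le> b + h"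
        unfolding box by auto
    qed
  next
    assume "pierces_box P w h"
    then show "\<forall>t. translate t ({0..w} \<times> {0..h}) \<inter> P \<noteq> {}"
      unfolding pierces_box_def box disjoint_iff by blast
  qed
qed

definition flip_snd :: "real \<times> real \<Rightarrow> real \<times> real" where
  "flip_snd z = (fst z, - snd z)"

lemma linear_flip_snd: "linear flip_snd"
  by (intro linearI) (simp_all add: flip_snd_def)

lemma linear_swap: "linear (prod.swap :: real \<times> real \<Rightarrow> real \<times> real)"
  by (intro linearI) (simp_all add: prod_eq_iff)

lemma det2_flip_snd [simp]: "det2 (flip_snd z) (flip_snd z') = - det2 z z'"
  by (simp add: flip_snd_def det2_def)

lemma pierces_box_flip_snd: "pierces_box P w h \<Longrightarrow> pierces_box (flip_snd ` P) w h"
  unfolding pierces_box_def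
proof (intro allI)
  fix a b assume "\<forall>a b. \<exists>z\<in>P. a \<le> fst z \<and> fst z \<le> a + w \<and> b \<le> snd z \<and> snd z \<le> b + h"
  then obtain z where "z \<in> P" "a \<le> fst z" "fst z \<le> a + w" "- b - h \<le> snd z" "snd z \<le> - b"
    by fastforce
  then show "\<exists>z\<in>flip_snd ` P. a \<le> fst z \<and> fst z \<le> a + w \<and> b \<le> snd z \<and> snd z \<le> b + h"
    by (intro bexI[of _ "flip_snd z"]) (auto simp: flip_snd_def)
qed

lemma pierces_box_swap: "pierces_box P w h \<Longrightarrow> pierces_box (prod.swap ` P) h w"
  unfolding pierces_box_def
proof (intro allI)
  fix a b assume "\<forall>a b. \<exists>z\<in>P. a \<le> fst z \<and> fst z \<le> a + w \<and> b \<le> snd z \<and> snd z \<le> b + h"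
  then obtain z where "z \<in> P" "b \<le> fst z" "fst z \<le> b + w" "a \<le> snd z" "snd z \<le> a + h"
    by blast
  then show "\<exists>z\<in>prod.swap ` P. a \<le> fst z \<and> fst z \<le> a + h \<and> b \<le> snd z \<and> snd z \<le> b + w"
    by (intro bexI[of _ "prod.swap z"]) auto
qed

text \<open>Shift the box to the right by less than every positive value fst z - w of the
  finitely many candidate points z.\<close>
lemma pierces_box_point_in_column:
  assumes pierces: "pierces_box P w h" and "0 < w"
    and fin: "finite (P \<inter> ({0<..2 * w} \<times> {- h / 2..h / 2}))"
  obtains z where "z \<in> P" "0 < fst z" "fst z \<le> w" "\<bar>snd z\<bar> \<le> h / 2"
proof -
  define S where "S = (\<lambda>z. fst z - w) ` (P \<inter> ({0<..2 * w} \<times> {- h / 2..h / 2})) \<inter> {0<..}"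
  define t where "t = Min (insert w S) / 2"
  have "finite S" "\<forall>s\<in>S. 0 < s" using fin by (auto simp: S_def)
  then have "0 < Min (insert w S)" "Min (insert w S) \<le> w" "\<forall>s\<in>S. Min (insert w S) \<le> s"
    using \<open>0 < w\<close> by (simp_all add: Min_le)
  then have t: "0 < t" "t \<le> w" and t_le: "\<And>s. s \<in> S \<Longrightarrow> 2 * t \<le> s"
    by (auto simp: t_def)
  obtain z where z: "z \<in> P" "t \<le> fst z" "fst z \<le> t + w" "- h / 2 \<le> snd z" "snd z \<le> - h / 2 + h"
    using pierces unfolding pierces_box_def by blast
  have "fst z \<le> w"
  proof (rule ccontr)
    assume "\<not> fst z \<le> w"
    then have "z \<in> P \<inter> ({0<..2 * w} \<times> {- h / 2..h / 2})" using z t by (auto simp: mem_Times_iff)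
    then have "fst z - w \<in> S" using \<open>\<not> fst z \<le> w\<close> unfolding S_def by auto
    then show False using t_le z t by fastforce
  qed
  then show thesis using that z t by auto
qed

section \<open>The gap between consecutive lattice rows\<close>

lemma lattice_rows_below:
  fixes p q :: "real \<times> real" and i j :: int
  defines "z \<equiv> of_int i *\<^sub>R p + of_int j *\<^sub>R q"
  assumes p: "0 < fst p" "0 \<le> snd p" and det: "fst p * snd p \<le> det2 p q"
    and "j \<le> 0" and left: "fst z < 0"
  shows "snd z \<le> - snd p"
proof -
  have D: "0 \<le> det2 p q" using mult_nonneg_nonneg[of "fst p" "snd p"] p det by linarith
  have row: "fst p * snd z = snd p * fst z + of_int j * det2 p q"
    by (simp add: z_def det2_def algebra_simps)
  show ?thesis
  proof (cases "j = 0")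
    case True
    then have "of_int i * fst p < 0" using left by (simp add: z_def)
    then have "of_int i \<le> (-1::real)" using p by (simp add: mult_less_0_iff)
    then have "of_int i * snd p \<le> -1 * snd p" using p by (intro mult_right_mono) simp_all
    then show ?thesis using True by (simp add: z_def)
  next
    case False
    then have "of_int j \<le> (-1::real)" using \<open>j \<le> 0\<close> by simp
    then have "of_int j * det2 p q \<le> -1 * det2 p q" using D by (rule mult_right_mono)
    moreover have "snd p * fst z \<le> 0" using p left by (simp add: mult_nonneg_nonpos)
    ultimately have "fst p * snd z \<le> fst p * (- snd p)" using row det by simp
    then show ?thesis using p(1) by (rule mult_left_le_imp_le)
  qed
qed

lemma lattice_rows_above:
  fixes p q :: "real \<times> real" and i j :: int
  defines "z \<equiv> of_int i *\<^sub>R p + of_int j *\<^sub>R q"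
  assumes p: "0 < fst p" "0 \<le> snd p" and det: "fst p * snd p \<le> det2 p q"
    and "1 \<le> j" and right: "a \<le> fst z"
  shows "snd q + of_int \<lceil>(a - fst q) / fst p\<rceil> * snd p \<le> snd z"
proof -
  define K where "K = \<lceil>(a - fst q) / fst p\<rceil>"
  show ?thesis
  proof (cases "j = 1")
    case True
    then have "(a - fst q) / fst p \<le> of_int i" using right p by (simp add: z_def pos_divide_le_eq)
    then have "of_int K * snd p \<le> of_int i * snd p"
      using p by (intro mult_right_mono) (simp_all add: K_def ceiling_le_iff)
    then show ?thesis using True by (simp add: z_def K_def)
  next
    case False
    have "of_int K - 1 < (a - fst q) / fst p" using ceiling_correct by (simp add: K_def)
    then have "(of_int K - 1) * fst p * snd p \<le> (a - fst q) * snd p"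
      using p by (intro mult_right_mono) (simp_all add: field_simps)
    then have "fst p * (snd q + of_int K * snd p) \<le> det2 p q + snd p * a + fst p * snd p"
      by (simp add: det2_def algebra_simps)
    also have "\<dots> \<le> snd p * fst z + 2 * det2 p q"
      using det mult_left_mono[OF right p(2)] by linarith
    also have "\<dots> \<le> snd p * fst z + of_int j * det2 p q"
      using False \<open>1 \<le> j\<close> det mult_nonneg_nonneg[OF less_imp_le[OF p(1)] p(2)]
      by (intro add_left_mono mult_right_mono) simp_all
    also have "\<dots> = fst p * snd z" by (simp add: z_def det2_def algebra_simps)
    finally show ?thesis using p by (simp add: K_def)
  qed
qed

text \<open>Row j of lattice p q consists of the points i p + j q. In the strip of width w just
  left of the origin, rows j \<le> 0 lie at height \<le> - snd p, and rows j \<ge> 1 lie at height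
  \<ge> snd q + K snd p, where i = K indexes the leftmost point of row 1 right of - w. A w by h
  box fits between them unless h is at least the difference.\<close>
lemma pierces_box_lattice_gap:
  assumes pierces: "pierces_box P w h" and sub: "P \<subseteq> lattice p q"
    and p: "0 < fst p" "0 \<le> snd p" and det: "fst p * snd p \<le> det2 p q"
  shows "snd q + snd p * (1 + of_int \<lceil>- (w + fst q) / fst p\<rceil>) \<le> h"
proof (rule ccontr)
  define c where "c = - (w + fst q) / fst p"
  define K where "K = \<lceil>c\<rceil>"
  define gap where "gap = snd q + snd p * (1 + of_int K)"
  assume "\<not> ?thesis"
  then have "h < gap" by (simp add: gap_def K_def c_def)
  have c: "of_int K - 1 < c" "c \<le> of_int K" using ceiling_correct by (simp_all add: K_def)
  define \<delta> where "\<delta> = (c - (of_int K - 1)) * fst p / 2"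
  have "0 < \<delta>" using c p by (simp add: \<delta>_def)
  have "(- w - \<delta> - fst q) / fst p = (c + of_int K - 1) / 2"
    using p by (simp add: \<delta>_def c_def field_simps)
  then have K: "\<lceil>(- w - \<delta> - fst q) / fst p\<rceil> = K"
    using c by (simp only:) (intro ceiling_unique; simp)
  obtain z where "z \<in> P" and x: "- w - \<delta> \<le> fst z" "fst z \<le> - w - \<delta> + w"
    and y: "- snd p + (gap - h) / 2 \<le> snd z" "snd z \<le> - snd p + (gap - h) / 2 + h"
    using pierces unfolding pierces_box_def by blast
  then have "z \<in> lattice p q" using sub by blast
  then obtain i j :: int where zij: "z = of_int i *\<^sub>R p + of_int j *\<^sub>R q"
    unfolding mem_lattice_iff by blast
  show False
  proof (cases "j \<le> 0")
    case True
    then have "snd z \<le> - snd p"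
      using lattice_rows_below[OF p det] x \<open>0 < \<delta>\<close> by (simp add: zij)
    then show False using y \<open>h < gap\<close> by (simp add: field_simps)
  next
    case False
    then have "snd q + of_int K * snd p \<le> snd z"
      using lattice_rows_above[OF p det, of j "- w - \<delta>" i] x by (simp add: zij K)
    then show False using y \<open>h < gap\<close> by (simp add: gap_def field_simps)
  qed
qed

lemma pierces_box_lattice_det2_le:
  assumes "pierces_box P w h" "P \<subseteq> lattice p q"
    and p: "0 < fst p" "0 \<le> snd p" and det: "fst p * snd p \<le> det2 p q"
  shows "det2 p q \<le> fst p * h + snd p * w - fst p * snd p"
proof -
  define K where "K = \<lceil>- (w + fst q) / fst p\<rceil>"
  have "- (w + fst q) / fst p \<le> of_int K" by (simp add: K_def)
  then have "- (w + fst q) \<le> of_int K * fst p" by (simp only: pos_divide_le_eq[OF p(1)])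
  then have "- (w + fst q) * snd p \<le> of_int K * fst p * snd p"
    using p by (intro mult_right_mono) simp_all
  moreover have "fst p * (snd q + snd p * (1 + of_int K)) \<le> fst p * h"
    using pierces_box_lattice_gap[OF assms] p by (simp add: K_def)
  ultimately show ?thesis by (simp add: det2_def algebra_simps)
qed

text \<open>With p = (px, py) and r = (-a, ry), resp. r = (b, ry), the hypotheses on L and M are
  the gap bounds of the 1 by 6 and of the 6 by 1 boxes, and the conclusions bound
  \<bar>det2 p r\<bar>.\<close>

text \<open>Equality holds for px = ry = 1, py = 5/2, a = 5/3.\<close>
lemma gap_bounds_sum_le_extremal:
  fixes px ry py a :: real
  assumes px: "0 < px" "px \<le> 1" and ry: "0 < ry" "ry \<le> 1"
    and py: "1 < py" "py \<le> 1 + 2 * ry" "ry + 2 * py \<le> 6"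
    and a: "1 < a" "a - 1 \<le> px" "px + 3 * a \<le> 6"
  shows "px * ry + py * a \<le> 31 / 6"
proof -
  consider "px \<le> 3/4" "ry \<le> 4/5" | "px \<ge> 3/4" "ry \<ge> 4/5" | "px \<le> 3/4" "ry \<ge> 4/5"
    | "px \<ge> 3/4" "ry \<le> 4/5"
    by linarith
  then show ?thesis
  proof cases
    case 1
    have "py * a \<le> (1 + 2 * ry) * (1 + px)" using py a by (intro mult_mono) auto
    moreover have "(1 + 2 * ry) * (1 + px) = 1 + px + 2 * ry + 2 * (px * ry)"
      by (simp add: algebra_simps)
    moreover have "px * ry \<le> 3/4 * (4/5)" using 1 px ry by (intro mult_mono) auto
    ultimately show ?thesis using 1 by linarith
  next
    case 2
    have "py * a \<le> ((6 - ry) / 2) * ((6 - px) / 3)" using py a by (intro mult_mono) auto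
    moreover have "((6 - ry) / 2) * ((6 - px) / 3) = 6 - px - ry + px * ry / 6"
      by (simp add: field_simps)
    moreover have "(1 - px) * (1 - ry) \<le> (1 - px) * (1/5)" using 2 px by (intro mult_left_mono) auto
    moreover have "(1 - px) * (1 - ry) \<le> (1/4) * (1 - ry)" using 2 ry by (intro mult_right_mono) auto
    moreover have "(1 - px) * (1 - ry) = 1 - px - ry + px * ry" by (simp add: algebra_simps)
    moreover have "(1 - px) * (1/5) = 1/5 - px/5" "(1/4) * (1 - ry) = 1/4 - ry/4" by simp_all
    ultimately show ?thesis using px ry by linarith
  next
    case 3
    have "py * a \<le> ((6 - ry) / 2) * (1 + px)" using py a by (intro mult_mono) auto
    moreover have "((6 - ry) / 2) * (1 + px) = 3 + 3 * px - ry / 2 - px * ry / 2"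
      by (simp add: field_simps)
    moreover have "px * ry \<le> 3/4 * ry" using 3 ry by (intro mult_right_mono) auto
    ultimately show ?thesis using 3 ry by linarith
  next
    case 4
    have "py * a \<le> (1 + 2 * ry) * ((6 - px) / 3)" using py a by (intro mult_mono) auto
    moreover have "(1 + 2 * ry) * ((6 - px) / 3) = 2 - px / 3 + 4 * ry - 2 * (px * ry) / 3"
      by (simp add: field_simps)
    moreover have "px * (ry - 1) \<le> 3/4 * (ry - 1)" using 4 ry by (intro mult_right_mono_neg) auto
    then have "px * ry \<le> px + 3/4 * ry - 3/4" by (simp add: algebra_simps)
    ultimately show ?thesis using 4 px ry by linarith
  qed
qed

lemma gap_bounds_sum_le_aux:
  fixes px ry py a :: real and M :: int
  assumes px: "0 < px" "px \<le> 1" and ry: "0 < ry" "ry \<le> 1"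
    and py: "1 < py" "ry + 2 * py \<le> 6" and a: "1 < a" "a - 1 \<le> px"
    and M: "(py - 1) / ry \<le> of_int M" "px + a * (1 + of_int M) \<le> 6"
  shows "px * ry + py * a \<le> 31 / 6"
proof -
  have py_le: "py \<le> 1 + of_int M * ry" using M(1) ry by (simp add: field_simps)
  have "0 < (py - 1) / ry" using py ry by simp
  then have "1 \<le> M" using M(1) by linarith
  then consider "M = 1" | "M = 2" | "3 \<le> M" by linarith
  then show ?thesis
  proof cases
    case 1
    then have "py * a \<le> (1 + ry) * (1 + px)" using py_le py a by (intro mult_mono) auto
    also have "\<dots> \<le> 2 * 2" using px ry by (intro mult_mono) auto
    finally show ?thesis using mult_le_one[of px ry] px ry by simp
  next
    case 2
    then show ?thesis
      using gap_bounds_sum_le_extremal[OF px ry] py_le py a M(2) by simp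
  next
    case 3
    then have "a * 4 \<le> a * (1 + of_int M)" using a by (intro mult_left_mono) auto
    then have "4 * a \<le> 6 - px" using M(2) by linarith
    then have "py * a \<le> ((6 - ry) / 2) * ((6 - px) / 4)" using py a by (intro mult_mono) auto
    moreover have "((6 - ry) / 2) * ((6 - px) / 4) = 9/2 - 3 * px / 4 - 3 * ry / 4 + (px * ry) / 8"
      by (simp add: field_simps)
    moreover have "px * ry \<le> px" "px * ry \<le> ry" using px ry by (simp_all add: mult_le_cancel_left1 mult_le_cancel_right1)
    ultimately show ?thesis using px ry by linarith
  qed
qed

lemma gap_bounds_sum_le:
  fixes px ry py a :: real and L M :: int
  assumes px: "0 < px" "px \<le> 1" and ry: "0 < ry" "ry \<le> 1" and "1 < py" "1 < a"
    and L: "(a - 1) / px \<le> of_int L" "ry + py * (1 + of_int L) \<le> 6"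
    and M: "(py - 1) / ry \<le> of_int M" "px + a * (1 + of_int M) \<le> 6"
  shows "px * ry + py * a \<le> 31 / 6"
proof -
  have "0 < (a - 1) / px" "0 < (py - 1) / ry" using assms by simp_all
  then have "1 \<le> L" "1 \<le> M" using L(1) M(1) by linarith+
  then consider "L = 1" | "M = 1" | "2 \<le> L" "2 \<le> M" by linarith
  then show ?thesis
  proof cases
    case 1
    then have "a - 1 \<le> px" using L(1) px by (simp add: field_simps)
    then show ?thesis using gap_bounds_sum_le_aux[OF px ry] assms 1 by simp
  next
    case 2
    then have "py - 1 \<le> ry" using M(1) ry by (simp add: field_simps)
    then have "ry * px + a * py \<le> 31 / 6" using gap_bounds_sum_le_aux[OF ry px] assms 2 by simp
    then show ?thesis by (simp add: mult.commute)
  next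
    case 3
    have "py * 3 \<le> py * (1 + of_int L)" "a * 3 \<le> a * (1 + of_int M)"
      using 3 \<open>1 < py\<close> \<open>1 < a\<close> by (intro mult_left_mono; simp)+
    then have "py \<le> 2" "a \<le> 2" using L(2) M(2) px ry by simp_all
    then have "py * a \<le> 2 * 2" using \<open>1 < py\<close> \<open>1 < a\<close> by (intro mult_mono) auto
    then show ?thesis using mult_le_one[of px ry] px ry by simp
  qed
qed

lemma gap_bounds_diff_le_aux:
  fixes px ry py b :: real and M :: int
  assumes px: "0 < px" "px \<le> 1" and ry: "0 < ry" "ry \<le> 1"
    and py: "1 < py" "py \<le> 3" and b: "1 < b" "b - 1 \<le> px"
    and M: "(py - 1) / ry \<le> of_int M" "- px + b * (1 + of_int M) \<le> 6"
  shows "py * b - px * ry \<le> 31 / 6"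
proof -
  have py_le: "py \<le> 1 + of_int M * ry" using M(1) ry by (simp add: field_simps)
  have "0 < (py - 1) / ry" using py ry by simp
  then have "1 \<le> M" using M(1) by linarith
  have "0 \<le> px * ry" "px * ry \<le> 1" using px ry by (simp_all add: mult_le_one)
  consider "M \<le> 2" | "3 \<le> M" "px \<le> 2/3" | "3 \<le> M" "2/3 < px" "1/12 \<le> ry" | "ry < 1/12"
    by linarith
  then show ?thesis
  proof cases
    case 1
    then have "of_int M * ry \<le> 2 * ry" using ry by (intro mult_right_mono) auto
    then have "py \<le> 1 + 2 * ry" using py_le by linarith
    then have "py * b \<le> (1 + 2 * ry) * (1 + px)" using b py by (intro mult_mono) auto
    moreover have "(1 + 2 * ry) * (1 + px) = 1 + 2 * ry + px + 2 * (px * ry)"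
      by (simp add: algebra_simps)
    ultimately show ?thesis using px ry \<open>px * ry \<le> 1\<close> by linarith
  next
    case 2
    have "py * b \<le> 3 * (5/3)" using py b 2 by (intro mult_mono) auto
    then show ?thesis using \<open>0 \<le> px * ry\<close> by simp
  next
    case 3
    have "b * 4 \<le> b * (1 + of_int M)" using 3 b by (intro mult_left_mono) auto
    then have "4 * b \<le> 6 + px" using M(2) by linarith
    then have "py * b \<le> 3 * ((6 + px) / 4)" using py b by (intro mult_mono) auto
    moreover have "px * (3/4 - ry) \<le> 2/3"
    proof (cases "ry \<le> 3/4")
      case True
      then have "px * (3/4 - ry) \<le> 1 * (2/3)" using px 3 by (intro mult_mono) auto
      then show ?thesis by simp
    next
      case False
      then have "px * (3/4 - ry) \<le> 0" using px by (intro mult_nonneg_nonpos) auto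
      then show ?thesis by linarith
    qed
    ultimately show ?thesis by (simp add: algebra_simps)
  next
    case 4
    have "py * (b * (1 + of_int M)) \<le> (1 + of_int M * ry) * (6 + px)"
      using py b M(2) py_le \<open>1 \<le> M\<close> by (intro mult_mono) auto
    also have "\<dots> \<le> (1 + of_int M * (1/12)) * 7"
      using 4 px ry \<open>1 \<le> M\<close> by (intro mult_mono add_mono mult_left_mono) auto
    also have "\<dots> \<le> 31/6 * (1 + of_int M)" using \<open>1 \<le> M\<close> by simp
    finally have "(py * b) * (1 + of_int M) \<le> 31/6 * (1 + of_int M)" by (simp add: algebra_simps)
    then have "py * b \<le> 31/6" by (rule mult_right_le_imp_le) (use \<open>1 \<le> M\<close> in simp)
    then show ?thesis using \<open>0 \<le> px * ry\<close> by simp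
  qed
qed

lemma gap_bounds_diff_le:
  fixes px ry py b :: real and L M :: int
  assumes px: "0 < px" "px \<le> 1" and ry: "0 < ry" "ry \<le> 1"
    and py: "1 < py" "py \<le> 3" and b: "1 < b" "b \<le> 3"
    and L: "(b - 1) / px \<le> of_int L" "- ry + py * (1 + of_int L) \<le> 6"
    and M: "(py - 1) / ry \<le> of_int M" "- px + b * (1 + of_int M) \<le> 6"
  shows "py * b - px * ry \<le> 31 / 6"
proof -
  have "0 < (b - 1) / px" "0 < (py - 1) / ry" using assms by simp_all
  then have "1 \<le> L" "1 \<le> M" using L(1) M(1) by linarith+
  have "0 \<le> px * ry" using px ry by simp
  consider "L = 1" | "M = 1" | "3 \<le> M" "2 \<le> L" | "3 \<le> L" "2 \<le> M" | "L = 2" "M = 2"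
    using \<open>1 \<le> L\<close> \<open>1 \<le> M\<close> by linarith
  then show ?thesis
  proof cases
    case 1
    then have "b - 1 \<le> px" using L(1) px by (simp add: field_simps)
    then show ?thesis using gap_bounds_diff_le_aux[OF px ry py b(1) _ M] by simp
  next
    case 2
    then have "py - 1 \<le> ry" using M(1) ry by (simp add: field_simps)
    then have "b * py - ry * px \<le> 31 / 6" using gap_bounds_diff_le_aux[OF ry px b py(1) _ L] by simp
    then show ?thesis by (simp add: mult.commute)
  next
    case 3
    have "py * 3 \<le> py * (1 + of_int L)" "b * 4 \<le> b * (1 + of_int M)"
      using 3 py b by (intro mult_left_mono; simp)+
    then have "3 * py \<le> 6 + ry" "4 * b \<le> 6 + px" using L(2) M(2) by linarith+
    then have "py * b \<le> (7/3) * (7/4)" using py b px ry by (intro mult_mono) auto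
    then show ?thesis using \<open>0 \<le> px * ry\<close> by simp
  next
    case 4
    have "py * 4 \<le> py * (1 + of_int L)" "b * 3 \<le> b * (1 + of_int M)"
      using 4 py b by (intro mult_left_mono; simp)+
    then have "4 * py \<le> 6 + ry" "3 * b \<le> 6 + px" using L(2) M(2) by linarith+
    then have "py * b \<le> (7/4) * (7/3)" using py b px ry by (intro mult_mono) auto
    then show ?thesis using \<open>0 \<le> px * ry\<close> by simp
  next
    case 5
    then have "3 * py \<le> 6 + ry" "3 * b \<le> 6 + px" using L(2) M(2) by simp_all
    then have "py * b \<le> ((6 + ry) / 3) * ((6 + px) / 3)" using py b by (intro mult_mono) auto
    moreover have "((6 + ry) / 3) * ((6 + px) / 3) = 4 + 2 * px / 3 + 2 * ry / 3 + (px * ry) / 9"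
      by (simp add: field_simps)
    moreover have "0 \<le> (1 - px) * (1 - ry)" using px ry by simp
    moreover have "(1 - px) * (1 - ry) = 1 - px - ry + px * ry" by (simp add: algebra_simps)
    ultimately show ?thesis using \<open>0 \<le> px * ry\<close> by linarith
  qed
qed

section \<open>Lattices piercing the boxes 1 by 6, 6 by 1 and 3 by 3\<close>

lemma abs_det2_le_5_if_pierces_square:
  assumes pierces: "pierces_box P 3 3" and sub: "P \<subseteq> lattice p q"
    and p: "0 < fst p" "fst p \<le> 1" "0 \<le> snd p" "snd p \<le> 1"
  shows "\<bar>det2 p q\<bar> \<le> 5"
proof -
  define q' where "q' = (if 0 \<le> det2 p q then q else - q)"
  have det: "det2 p q' = \<bar>det2 p q\<bar>" by (simp add: q'_def)
  have sub': "P \<subseteq> lattice p q'" using sub by (simp add: q'_def lattice_uminus_right)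
  have "fst p * snd p \<le> 1" using p by (simp add: mult_le_one)
  show ?thesis
  proof (cases "fst p * snd p \<le> det2 p q'")
    case True
    have "det2 p q' \<le> 3 * fst p + 3 * snd p - fst p * snd p"
      using pierces_box_lattice_det2_le[OF pierces sub' p(1,3) True] by simp
    moreover have "0 \<le> (1 - fst p) * (1 - snd p)" using p by simp
    ultimately show ?thesis using det \<open>fst p * snd p \<le> 1\<close> by (simp add: algebra_simps)
  next
    case False
    then show ?thesis using det \<open>fst p * snd p \<le> 1\<close> by simp
  qed
qed

lemma abs_det2_le_5_if_short_lattice_point:
  assumes nonzero: "det2 u v \<noteq> 0" and pierces: "pierces_box (lattice u v) 3 3"
    and z: "z \<in> lattice u v" "0 < fst z" "fst z \<le> 1" "\<bar>snd z\<bar> \<le> 1"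
  shows "\<bar>det2 u v\<bar> \<le> 5"
proof -
  have "z \<noteq> 0" using z by auto
  then obtain g y q where g: "1 \<le> g" "z = of_int g *\<^sub>R y"
    and y: "y \<in> lattice u v" "q \<in> lattice u v" and det: "det2 y q = det2 u v"
    using lattice_point_multiple_of_primitive z(1) by blast
  have sub: "lattice u v \<subseteq> lattice y q"
    using lattice_subset_lattice_if_abs_det2_eq[OF y] det nonzero by simp
  have scale: "\<bar>c\<bar> \<le> \<bar>of_int g * c\<bar>" for c :: real
    using g by (simp add: abs_mult mult_le_cancel_right1)
  have "fst z = of_int g * fst y" "snd z = of_int g * snd y" using g by simp_all
  moreover have "0 < fst y" using z g by (simp add: zero_less_mult_iff)
  moreover have "1 * fst y \<le> of_int g * fst y" using g \<open>0 < fst y\<close> by (intro mult_right_mono) simp_all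
  ultimately have y_short: "0 < fst y" "fst y \<le> 1" "\<bar>snd y\<bar> \<le> 1"
    using z(3,4) scale[of "snd y"] by linarith+
  show ?thesis
  proof (cases "0 \<le> snd y")
    case True
    then have "\<bar>det2 y q\<bar> \<le> 5"
      using abs_det2_le_5_if_pierces_square[OF pierces sub] y_short by simp
    then show ?thesis using det by simp
  next
    case False
    have "flip_snd ` lattice u v \<subseteq> lattice (flip_snd y) (flip_snd q)"
      using linear_flip_snd sub by (rule linear_image_subset_lattice)
    then have "\<bar>det2 (flip_snd y) (flip_snd q)\<bar> \<le> 5"
      using abs_det2_le_5_if_pierces_square[OF pierces_box_flip_snd[OF pierces]] False y_short
      by (simp add: flip_snd_def)
    then show ?thesis using det by simp
  qed
qed

lemma det2_le_31_6_if_steep_flat_left: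
  assumes T: "pierces_box P 1 6" and W: "pierces_box P 6 1" and sub: "P \<subseteq> lattice p r"
    and p: "0 < fst p" "fst p \<le> 1" "1 < snd p"
    and r: "0 < snd r" "snd r \<le> 1" "fst r < -1"
  shows "det2 p r \<le> 31 / 6"
proof -
  define a where "a = - fst r"
  have det: "det2 p r = fst p * snd r + a * snd p" by (simp add: det2_def a_def)
  have "fst p * snd p \<le> a * snd p" by (rule mult_right_mono) (use p r in \<open>auto simp: a_def\<close>)
  then have "fst p * snd p \<le> det2 p r" using det mult_nonneg_nonneg[of "fst p" "snd r"] p r by linarith
  moreover have "a - 1 = - (1 + fst r)" by (simp add: a_def)
  ultimately have L: "snd r + snd p * (1 + of_int \<lceil>(a - 1) / fst p\<rceil>) \<le> 6"
    using pierces_box_lattice_gap[OF T sub p(1)] p by (simp only:)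
  define rot where "rot = flip_snd \<circ> prod.swap"
  have "linear rot" unfolding rot_def by (rule linear_compose[OF linear_swap linear_flip_snd])
  have "rot ` P \<subseteq> lattice (rot p) (rot r)" using \<open>linear rot\<close> sub by (rule linear_image_subset_lattice)
  then have "rot ` P \<subseteq> lattice (rot r) (- rot p)"
    by (simp only: lattice_commute[of "rot p"] lattice_uminus_right)
  moreover have "rot r = (snd r, a)" "- rot p = (- snd p, fst p)"
    by (simp_all add: rot_def flip_snd_def a_def)
  ultimately have sub_rot: "rot ` P \<subseteq> lattice (snd r, a) (- snd p, fst p)" by simp
  have "pierces_box (rot ` P) 1 6"
    using pierces_box_flip_snd[OF pierces_box_swap[OF W]] by (simp add: rot_def image_comp)
  have "snd r * a \<le> snd p * a" by (rule mult_right_mono) (use p r in \<open>auto simp: a_def\<close>)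
  moreover have "0 \<le> snd r * fst p" using p r by simp
  moreover have "det2 (snd r, a) (- snd p, fst p) = snd r * fst p + snd p * a" by (simp add: det2_def)
  ultimately have "snd r * a \<le> det2 (snd r, a) (- snd p, fst p)" by linarith
  then have M: "fst p + a * (1 + of_int \<lceil>(snd p - 1) / snd r\<rceil>) \<le> 6"
    using pierces_box_lattice_gap[OF \<open>pierces_box (rot ` P) 1 6\<close> sub_rot] r by (simp add: a_def)
  have "fst p * snd r + snd p * a \<le> 31 / 6"
    using gap_bounds_sum_le[OF p(1,2) r(1,2) p(3) _ _ L _ M] r by (simp add: a_def)
  then show ?thesis using det by (simp add: mult.commute)
qed

lemma det2_le_31_6_if_steep_flat_right:
  assumes T: "pierces_box P 1 6" and W: "pierces_box P 6 1" and sub: "P \<subseteq> lattice p r"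
    and p: "0 < fst p" "fst p \<le> 1" "1 < snd p" "snd p \<le> 3"
    and r: "0 < snd r" "snd r \<le> 1" "1 < fst r" "fst r \<le> 3"
  shows "det2 r p \<le> 31 / 6"
proof (rule ccontr)
  assume "\<not> ?thesis"
  moreover have "det2 r p = snd p * fst r - fst p * snd r"
    "det2 p (- r) = snd p * fst r - fst p * snd r"
    "det2 (snd r, fst r) (- snd p, - fst p) = snd p * fst r - fst p * snd r"
    by (simp_all add: det2_def algebra_simps)
  ultimately have big: "31 / 6 < snd p * fst r - fst p * snd r" and
    det: "det2 p (- r) = snd p * fst r - fst p * snd r"
    "det2 (snd r, fst r) (- snd p, - fst p) = snd p * fst r - fst p * snd r"
    by simp_all
  have "fst p * snd p \<le> 1 * 3" using p by (intro mult_mono) auto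
  then have "fst p * snd p \<le> det2 p (- r)" using big det by linarith
  moreover have sub1: "P \<subseteq> lattice p (- r)" using sub by (simp add: lattice_uminus_right)
  ultimately have L: "- snd r + snd p * (1 + of_int \<lceil>(fst r - 1) / fst p\<rceil>) \<le> 6"
    using pierces_box_lattice_gap[OF T sub1 p(1)] p by simp
  have "prod.swap ` P \<subseteq> lattice (prod.swap p) (prod.swap r)"
    using linear_swap sub by (rule linear_image_subset_lattice)
  then have "prod.swap ` P \<subseteq> lattice (prod.swap r) (- prod.swap p)"
    by (simp only: lattice_commute[of "prod.swap p"] lattice_uminus_right)
  moreover have "prod.swap r = (snd r, fst r)" "- prod.swap p = (- snd p, - fst p)"
    by (simp_all add: prod.swap_def)
  ultimately have sub_swap: "prod.swap ` P \<subseteq> lattice (snd r, fst r) (- snd p, - fst p)" by simp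
  have "snd r * fst r \<le> 1 * 3" using r by (intro mult_mono) auto
  then have "snd r * fst r \<le> det2 (snd r, fst r) (- snd p, - fst p)"
    using big det by linarith
  then have M: "- fst p + fst r * (1 + of_int \<lceil>(snd p - 1) / snd r\<rceil>) \<le> 6"
    using pierces_box_lattice_gap[OF pierces_box_swap[OF W] sub_swap] r by simp
  have "snd p * fst r - fst p * snd r \<le> 31 / 6"
    using gap_bounds_diff_le[OF p(1,2) r(1,2) p(3,4) r(3,4) _ L _ M] by simp
  then show False using big by simp
qed

lemma abs_det2_le_31_6_if_steep_flat:
  assumes T: "pierces_box P 1 6" and W: "pierces_box P 6 1" and sub: "P \<subseteq> lattice p r"
    and p: "0 < fst p" "fst p \<le> 1" "1 < \<bar>snd p\<bar>" "\<bar>snd p\<bar> \<le> 3"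
    and r: "0 < snd r" "snd r \<le> 1" "1 < \<bar>fst r\<bar>" "\<bar>fst r\<bar> \<le> 3"
  shows "\<bar>det2 p r\<bar> \<le> 31 / 6"
proof -
  have upward: "\<bar>det2 p r\<bar> \<le> 31 / 6"
    if T: "pierces_box P 1 6" and W: "pierces_box P 6 1" and sub: "P \<subseteq> lattice p r"
      and p: "0 < fst p" "fst p \<le> 1" "1 < snd p" "snd p \<le> 3"
      and r: "0 < snd r" "snd r \<le> 1" "1 < \<bar>fst r\<bar>" "\<bar>fst r\<bar> \<le> 3" for P p r
  proof (cases "fst r < 0")
    case True
    have "snd p * fst r < 0" "0 < fst p * snd r" using p r True by (simp_all add: mult_pos_neg)
    then have "0 < det2 p r" by (simp add: det2_def)
    then show ?thesis using det2_le_31_6_if_steep_flat_left[OF T W sub p(1-3) r(1,2)] r True by simp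
  next
    case False
    have "fst p * snd r \<le> 1 * 1" "1 * 1 < snd p * fst r" using p r False by (intro mult_mono mult_strict_mono; simp)+
    then have "det2 p r < 0" by (simp add: det2_def)
    then show ?thesis
      using det2_le_31_6_if_steep_flat_right[OF T W sub p] r False by (simp add: det2_commute[of p r])
  qed
  show ?thesis
  proof (cases "0 < snd p")
    case True
    then show ?thesis using upward[OF T W sub] p r by simp
  next
    case False
    have "flip_snd ` P \<subseteq> lattice (flip_snd p) (flip_snd r)"
      using linear_flip_snd sub by (rule linear_image_subset_lattice)
    then have "flip_snd ` P \<subseteq> lattice (flip_snd p) (- flip_snd r)"
      by (simp only: lattice_uminus_right)
    then have "\<bar>det2 (flip_snd p) (- flip_snd r)\<bar> \<le> 31 / 6"
      using upward[OF pierces_box_flip_snd[OF T] pierces_box_flip_snd[OF W]] p r False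
      by (simp add: flip_snd_def)
    then show ?thesis by simp
  qed
qed

lemma abs_det2_le_31_6_if_steep_flat_mem_lattice:
  assumes nonzero: "det2 u v \<noteq> 0" and T: "pierces_box (lattice u v) 1 6"
    and W: "pierces_box (lattice u v) 6 1"
    and p: "p \<in> lattice u v" "0 < fst p" "fst p \<le> 1" "1 < \<bar>snd p\<bar>" "\<bar>snd p\<bar> \<le> 3"
    and r: "r \<in> lattice u v" "0 < snd r" "snd r \<le> 1" "1 < \<bar>fst r\<bar>" "\<bar>fst r\<bar> \<le> 3"
  shows "\<bar>det2 u v\<bar> \<le> 31 / 6"
proof -
  have det: "det2 p r = fst p * snd r - snd p * fst r" by (simp add: det2_def)
  have "0 < fst p * snd r" "fst p * snd r \<le> 1" using p r by (simp_all add: mult_le_one)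
  moreover have "1 * 1 < \<bar>snd p\<bar> * \<bar>fst r\<bar>" using p r by (intro mult_strict_mono) simp_all
  moreover have "\<bar>snd p\<bar> * \<bar>fst r\<bar> \<le> 3 * 3" using p r by (intro mult_mono) simp_all
  ultimately have "det2 p r \<noteq> 0" "\<bar>det2 p r\<bar> \<le> 10"
    unfolding det abs_mult[symmetric] by linarith+
  \<comment> \<open>p and r span a sublattice of index \<bar>det2 p r\<bar> / \<bar>det2 u v\<bar>, which is 1 unless
    \<bar>det2 u v\<bar> \<le> 5\<close>
  then have "\<bar>det2 p r\<bar> = \<bar>det2 u v\<bar> \<or> \<bar>det2 u v\<bar> \<le> 5"
    using abs_det2_lattice_eq_or_ge_double[OF p(1) r(1)] by auto
  moreover have "\<bar>det2 p r\<bar> \<le> 31 / 6" if "\<bar>det2 p r\<bar> = \<bar>det2 u v\<bar>"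
    using abs_det2_le_31_6_if_steep_flat[OF T W lattice_subset_lattice_if_abs_det2_eq[OF p(1) r(1) that nonzero]]
      p r by simp
  ultimately show ?thesis by auto
qed

theorem abs_det2_le_31_6_if_lattice_pierces_boxes:
  assumes nonzero: "det2 u v \<noteq> 0" and T: "pierces_box (lattice u v) 1 6"
    and W: "pierces_box (lattice u v) 6 1" and S: "pierces_box (lattice u v) 3 3"
  shows "\<bar>det2 u v\<bar> \<le> 31 / 6"
proof -
  have swap: "prod.swap ` lattice u v = lattice (prod.swap u) (prod.swap v)"
    by (rule linear_image_lattice[OF linear_swap])
  have nonzero': "det2 (prod.swap u) (prod.swap v) \<noteq> 0" using nonzero by simp
  have "finite (lattice u v \<inter> ({0<..2 * 1} \<times> {- 6 / 2..6 / 2}))"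
    using nonzero by (rule finite_lattice_Int_bounded) (simp add: bounded_Times)
  then obtain p where p: "p \<in> lattice u v" "0 < fst p" "fst p \<le> 1" "\<bar>snd p\<bar> \<le> 6 / 2"
    by (rule pierces_box_point_in_column[OF T zero_less_one])
  have "finite (lattice (prod.swap u) (prod.swap v) \<inter> ({0<..2 * 1} \<times> {- 6 / 2..6 / 2}))"
    using nonzero' by (rule finite_lattice_Int_bounded) (simp add: bounded_Times)
  then obtain r' where r': "r' \<in> lattice (prod.swap u) (prod.swap v)" "0 < fst r'" "fst r' \<le> 1"
      "\<bar>snd r'\<bar> \<le> 6 / 2"
    by (rule pierces_box_point_in_column[OF pierces_box_swap[OF W, unfolded swap] zero_less_one])
  define r where "r = prod.swap r'"
  have "r \<in> prod.swap ` lattice (prod.swap u) (prod.swap v)" using r'(1) by (simp add: r_def)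
  then have r: "r \<in> lattice u v" "0 < snd r" "snd r \<le> 1" "\<bar>fst r\<bar> \<le> 3"
    using r' by (simp_all add: r_def linear_image_lattice[OF linear_swap])
  have "fst r = snd r'" by (simp add: r_def)
  then consider "\<bar>snd p\<bar> \<le> 1" | "\<bar>snd r'\<bar> \<le> 1" | "1 < \<bar>snd p\<bar>" "1 < \<bar>fst r\<bar>"
    by linarith
  then show ?thesis
  proof cases
    case 1
    then show ?thesis using abs_det2_le_5_if_short_lattice_point[OF nonzero S p(1-3)] by simp
  next
    case 2
    then have "\<bar>det2 u v\<bar> \<le> 5"
      using abs_det2_le_5_if_short_lattice_point[OF nonzero' pierces_box_swap[OF S, unfolded swap] r'(1-3)]
      by simp
    then show ?thesis by simp
  next
    case 3
    have "\<bar>snd p\<bar> \<le> 3" using p(4) by simp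
    then show ?thesis
      by (rule abs_det2_le_31_6_if_steep_flat_mem_lattice[OF nonzero T W p(1-3) 3(1) _ r(1-3) 3(2) r(4)])
  qed
qed

section \<open>A periodic piercing set of density 1/6\<close>

text \<open>On the residues 0, ..., 5 this is the permutation 0 2 4 1 3 5.\<close>
definition perm6 :: "int \<Rightarrow> int" where
  "perm6 x = (2 * x + x mod 6 div 3) mod 6"

definition periodic_graph :: "(real \<times> real) set" where
  "periodic_graph = {(of_int x, of_int y) | x y :: int. y mod 6 = perm6 x}"

lemma perm6_cong: "x mod 6 = y mod 6 \<Longrightarrow> perm6 x = perm6 y"
  unfolding perm6_def by (metis mod_add_left_eq mod_mult_right_eq)

lemma int_Ico_0_6: "{0..<6::int} = {0, 1, 2, 3, 4, 5}"
  and int_Ico_0_3: "{0..<3::int} = {0, 1, 2}"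
  and int_Ico_0_1: "{0..<1::int} = {0}"
  by auto

lemma pierces_box_periodic_graph_if_covers:
  assumes cover: "\<forall>\<alpha>\<in>{0..<6}. \<forall>\<beta>\<in>{0..<6}. \<exists>k\<in>{0..<w}. \<exists>m\<in>{0..<h}. (\<beta> + m) mod 6 = perm6 (\<alpha> + k)"
  shows "pierces_box periodic_graph (of_int w) (of_int h)"
  unfolding pierces_box_def
proof (intro allI)
  fix a b :: real
  obtain k m where k: "0 \<le> k" "k < w" and m: "0 \<le> m" "m < h"
    and km: "(\<lceil>b\<rceil> mod 6 + m) mod 6 = perm6 (\<lceil>a\<rceil> mod 6 + k)"
    using cover by fastforce
  define x y where "x = \<lceil>a\<rceil> + k" and "y = \<lceil>b\<rceil> + m"
  have "y mod 6 = perm6 x"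
    using km perm6_cong[of "\<lceil>a\<rceil> mod 6 + k" x] by (simp add: x_def y_def mod_add_left_eq)
  then have "(of_int x, of_int y) \<in> periodic_graph" unfolding periodic_graph_def by blast
  moreover have "0 \<le> (of_int k :: real)" "of_int k \<le> (of_int w :: real) - 1"
    "0 \<le> (of_int m :: real)" "of_int m \<le> (of_int h :: real) - 1"
    using k m by simp_all
  then have "a \<le> of_int x" "of_int x \<le> a + of_int w" "b \<le> of_int y" "of_int y \<le> b + of_int h"
    unfolding x_def y_def of_int_add using ceiling_correct[of a] ceiling_correct[of b] by linarith+
  ultimately show "\<exists>z\<in>periodic_graph. a \<le> fst z \<and> fst z \<le> a + of_int w \<and> b \<le> snd z \<and> snd z \<le> b + of_int h"
    by force
qed

lemma pierces_box_periodic_graph: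
  "pierces_box periodic_graph 1 6" "pierces_box periodic_graph 6 1" "pierces_box periodic_graph 3 3"
  using pierces_box_periodic_graph_if_covers[of 1 6] pierces_box_periodic_graph_if_covers[of 6 1]
    pierces_box_periodic_graph_if_covers[of 3 3]
  by (simp_all add: int_Ico_0_6 int_Ico_0_3 int_Ico_0_1 perm6_def)

lemma card_int_Icc_ceiling_floor_le:
  fixes a b :: real
  assumes "a \<le> b + 1"
  shows "real (card {\<lceil>a\<rceil>..\<lfloor>b\<rfloor>}) \<le> b - a + 1"
proof (cases "\<lceil>a\<rceil> \<le> \<lfloor>b\<rfloor> + 1")
  case True
  then have "real (card {\<lceil>a\<rceil>..\<lfloor>b\<rfloor>}) = of_int (\<lfloor>b\<rfloor> - \<lceil>a\<rceil> + 1)" by simp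
  then show ?thesis using of_int_floor_le[of b] le_of_int_ceiling[of a] by linarith
next
  case False
  then show ?thesis using assms by simp
qed

lemma card_periodic_graph_Int_square_le:
  fixes r :: real
  assumes "0 \<le> r"
  shows "finite (periodic_graph \<inter> ({-r..r} \<times> {-r..r}))"
    and "real (card (periodic_graph \<inter> ({-r..r} \<times> {-r..r}))) \<le> (2 * r + 1) * (2 * r + 11) / 6"
proof -
  define X where "X = {\<lceil>-r\<rceil>..\<lfloor>r\<rfloor>}"
  define T where "T = {\<lceil>(-r - 5) / 6\<rceil>..\<lfloor>r / 6\<rfloor>}"
  define f where "f = (\<lambda>(x, t). (real_of_int x, real_of_int (perm6 x + 6 * t)))"
  have "periodic_graph \<inter> ({-r..r} \<times> {-r..r}) \<subseteq> f ` (X \<times> T)"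
  proof
    fix z assume z: "z \<in> periodic_graph \<inter> ({-r..r} \<times> {-r..r})"
    then obtain x y :: int where xy: "z = (of_int x, of_int y)" "y mod 6 = perm6 x"
      unfolding periodic_graph_def by blast
    define t where "t = y div 6"
    have y: "y = perm6 x + 6 * t" using div_mult_mod_eq[of y 6] xy(2) unfolding t_def by linarith
    have "0 \<le> perm6 x" "perm6 x \<le> 5" by (simp_all add: perm6_def)
    then have "-r - 5 \<le> 6 * of_int t" "6 * of_int t \<le> r"
      using z xy y by (auto simp: mem_Times_iff)
    then have "t \<in> T" by (simp add: T_def ceiling_le_iff le_floor_iff)
    moreover have "x \<in> X" using z xy by (simp add: X_def ceiling_le_iff le_floor_iff mem_Times_iff)
    ultimately show "z \<in> f ` (X \<times> T)" by (auto simp: f_def xy y intro: image_eqI[of _ _ "(x, t)"])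
  qed
  moreover have "finite (X \<times> T)" by (simp add: X_def T_def)
  ultimately show "finite (periodic_graph \<inter> ({-r..r} \<times> {-r..r}))" by (meson finite_imageI finite_subset)
  have "card (periodic_graph \<inter> ({-r..r} \<times> {-r..r})) \<le> card (f ` (X \<times> T))"
    using \<open>_ \<subseteq> f ` (X \<times> T)\<close> \<open>finite (X \<times> T)\<close> by (intro card_mono) auto
  also have "\<dots> \<le> card X * card T" using card_image_le[OF \<open>finite (X \<times> T)\<close>] by (simp add: card_cartesian_product)
  finally have "real (card (periodic_graph \<inter> ({-r..r} \<times> {-r..r}))) \<le> real (card X) * real (card T)"
    by (simp flip: of_nat_mult)
  also have "\<dots> \<le> (r - (-r) + 1) * (r / 6 - (-r - 5) / 6 + 1)"
    unfolding X_def T_def using assms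
    by (intro mult_mono card_int_Icc_ceiling_floor_le) simp_all
  finally show "real (card (periodic_graph \<inter> ({-r..r} \<times> {-r..r}))) \<le> (2 * r + 1) * (2 * r + 11) / 6"
    by (simp add: field_simps)
qed

lemma density_periodic_graph_le: "density periodic_graph \<le> ereal (1 / 6)"
proof -
  have "\<forall>\<^sub>F r in at_top. count_ratio periodic_graph r \<le> ereal ((2 * r + 1) * (2 * r + 11) / (24 * r\<^sup>2))"
    using eventually_gt_at_top[of "0::real"]
  proof eventually_elim
    case (elim r)
    have "real (card (periodic_graph \<inter> ({-r..r} \<times> {-r..r}))) / (2 * r)\<^sup>2
        \<le> ((2 * r + 1) * (2 * r + 11) / 6) / (2 * r)\<^sup>2"
      using card_periodic_graph_Int_square_le(2)[of r] elim by (intro divide_right_mono) simp_all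
    then show ?case
      using card_periodic_graph_Int_square_le(1)[of r] elim
      by (simp add: count_ratio_def power2_eq_square field_simps)
  qed
  then have "density periodic_graph \<le> Limsup at_top (\<lambda>r. ereal ((2 * r + 1) * (2 * r + 11) / (24 * r\<^sup>2)))"
    unfolding density_def by (rule Limsup_mono)
  also have "\<dots> = ereal (1 / 6)"
  proof (rule lim_imp_Limsup)
    have "((\<lambda>r::real. (2 * r + 1) * (2 * r + 11) / (24 * r\<^sup>2)) \<longlongrightarrow> 1 / 6) at_top"
      by real_asymp
    then show "((\<lambda>r. ereal ((2 * r + 1) * (2 * r + 11) / (24 * r\<^sup>2))) \<longlongrightarrow> ereal (1 / 6)) at_top"
      by (rule tendsto_ereal)
  qed simp
  finally show ?thesis .
qed

definition F0 :: "(real \<times> real) set set" where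
  "F0 = {{0..1} \<times> {0..6}, {0..6} \<times> {0..1}, {0..3} \<times> {0..3}}"

lemma piercing_F0_iff: "piercing F0 P \<longleftrightarrow> pierces_box P 1 6 \<and> pierces_box P 6 1 \<and> pierces_box P 3 3"
  unfolding piercing_def F0_def using translates_meet_iff_pierces_box by auto

lemma card_F0: "card F0 = 3"
proof -
  define R1 R2 R3 :: "(real \<times> real) set"
    where "R1 = {0..1} \<times> {0..6}" and "R2 = {0..6} \<times> {0..1}" and "R3 = {0..3} \<times> {0..3}"
  have "(1, 6) \<in> R1" "(1, 6) \<notin> R2" "(1, 6) \<notin> R3" "(6, 1) \<in> R2" "(6, 1) \<notin> R3"
    by (simp_all add: R1_def R2_def R3_def)
  then have "R1 \<noteq> R2" "R1 \<noteq> R3" "R2 \<noteq> R3" by auto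
  then show ?thesis by (simp add: F0_def flip: R1_def R2_def R3_def)
qed

lemma closed_axis_rect_Icc_Times: "a < b \<Longrightarrow> c < d \<Longrightarrow> closed_axis_rect ({a..b} \<times> {c..d})"
  unfolding closed_axis_rect_def by blast

lemma closed_axis_rect_F0: "\<forall>R\<in>F0. closed_axis_rect R"
  unfolding F0_def by (simp add: closed_axis_rect_Icc_Times)

lemma lattice_pierce_num_F0_ge: "ereal (6 / 31) \<le> lattice_pierce_num F0"
  unfolding lattice_pierce_num_def
proof (rule Inf_greatest)
  fix x assume "x \<in> {ereal (1 / \<bar>det2 u v\<bar>) | u v.
      independent {u, v} \<and> u \<noteq> v \<and> piercing F0 (lattice u v)}"
  then obtain u v where x: "x = ereal (1 / \<bar>det2 u v\<bar>)"
    and uv: "independent {u, v}" "u \<noteq> v" and "piercing F0 (lattice u v)"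
    by blast
  then have "pierces_box (lattice u v) 1 6" "pierces_box (lattice u v) 6 1" "pierces_box (lattice u v) 3 3"
    by (simp_all add: piercing_F0_iff)
  moreover have "det2 u v \<noteq> 0" using uv by (rule det2_nonzero_if_independent)
  ultimately have "det2 u v \<noteq> 0" "\<bar>det2 u v\<bar> \<le> 31 / 6"
    using abs_det2_le_31_6_if_lattice_pierces_boxes by blast+
  then show "ereal (6 / 31) \<le> x" by (simp add: x field_simps)
qed

lemma pierce_num_F0_le: "pierce_num F0 \<le> ereal (1 / 6)"
proof -
  have "piercing F0 periodic_graph" by (simp add: piercing_F0_iff pierces_box_periodic_graph)
  then have "pierce_num F0 \<le> density periodic_graph" unfolding pierce_num_def by (intro Inf_lower) blast
  also have "\<dots> \<le> ereal (1 / 6)" by (rule density_periodic_graph_le)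
  finally show ?thesis .
qed

theorem theorem5:
  shows "\<exists>F0. card F0 = 3 \<and> (\<forall>R\<in>F0. closed_axis_rect R) \<and>
           lattice_pierce_num F0 \<ge> ereal (36/31) * pierce_num F0"
proof (intro exI[of _ F0] conjI card_F0 closed_axis_rect_F0)
  have "ereal (36 / 31) * pierce_num F0 \<le> ereal (36 / 31) * ereal (1 / 6)"
    by (rule ereal_mult_left_mono[OF pierce_num_F0_le]) simp
  also have "\<dots> = ereal (6 / 31)" by simp
  also have "\<dots> \<le> lattice_pierce_num F0" by (rule lattice_pierce_num_F0_ge)
  finally show "ereal (36 / 31) * pierce_num F0 \<le> lattice_pierce_num F0" .
qed

end
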